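(* Let $(Q,P)$ be a weakly quasi-lattice ordered group and let $\Lambda$ be a $P$-graph with $\mathrm{FA}(\Lambda)\neq\emptyset$. Then the path space $\mathcal{X}(\Lambda)$ and the boundary-path space $\partial\mathcal{X}(\Lambda)$ are Hausdorff and each has a countable basis consisting of compact sets. Moreover, $\mathcal{X}(\Lambda)$ is open in $\mathcal{F}(\Lambda)$.
   Context: A weakly quasi-lattice ordered group $(Q,P)$ consists of a discrete group $Q$ and a subsemigroup $P\subseteq Q$ containing the identity $e$ with $P\cap P^{-1}=\{e\}$, such that, with $p\le r$ meaning $pq=r$ for some $q\in P$, any two elements of $P$ having a common upper bound in $P$ have a least common upper bound. A $P$-graph is a countable small category $\Lambda$ (identity morphisms $\Lambda^{(0)}$, range and source maps $r,s$, composite $\mu\nu$ defined when $s(\mu)=r(\nu)$) with a functor $d:\Lambda\to P$ satisfying unique factorisation: whenever $d(\lambda)=pq$ with $p,q\in P$ there are unique $\mu,\nu\in\Lambda$ with $\lambda=\mu\nu$, $d(\mu)=p$, $d(\nu)=q$. Write $\lambda\Lambda=\{\lambda\mu:\mu\in\Lambda,\ s(\lambda)=r(\mu)\}$ and $\mu\preceq\lambda$ if $\lambda=\mu\nu$ for some $\nu\in\Lambda$. $\Lambda$ is finitely aligned at $(\mu,\nu)$ if there is a finite (possibly empty) $J\subseteq\Lambda$ with $\mu\Lambda\cap\nu\Lambda=\bigcup_{\lambda\in J}\lambda\Lambda$; $\Lambda$ is finitely aligned at $\lambda$ if it is finitely aligned at $(\mu,\nu)$ for all $\mu\in\lambda\Lambda$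 and $\nu\in\Lambda$; $\mathrm{FA}(\Lambda)$ is the set of $\lambda\in\Lambda$ at which $\Lambda$ is finitely aligned. The power set $\mathcal{P}(\Lambda)$ carries the product topology from its identification with $\prod_{\lambda\in\Lambda}\{0,1\}$ (each factor discrete); a basis is given by the sets $\{x\subseteq\Lambda: K_1\subseteq x\subseteq\Lambda\setminus K_2\}$ for finite $K_1,K_2\subseteq\Lambda$. Subsets of $\mathcal{P}(\Lambda)$ carry the subspace topology. A filter is a nonempty $x\subseteq\Lambda$ that is hereditary ($\lambda\preceq\mu\in x$ implies $\lambda\in x$) and directed ($\mu,\nu\in x$ implies there is $\lambda\in x$ with $\mu,\nu\preceq\lambda$); $\mathcal{F}(\Lambda)$ is the set of filters and $\mathcal{U}(\Lambda)$ the set of ultrafilters (filters maximal under inclusion). The path space is $\mathcal{X}(\Lambda)=\{x\in\mathcal{F}(\Lambda): x\cap\mathrm{FA}(\Lambda)\neq\emptyset\}$, and the boundary-path space $\partial\mathcal{X}(\Lambda)$ is the closure of $\mathcal{U}(\Lambda)\cap\mathcal{X}(\Lambda)$ in $\mathcal{X}(\Lambda)$. *)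

theory Defs
  imports "HOL-Analysis.Analysis" "HOL-Algebra.Group"
begin

definition pleq :: "('g, 'z) monoid_scheme \<Rightarrow> 'g set \<Rightarrow> 'g \<Rightarrow> 'g \<Rightarrow> bool" where
  "pleq Q P p r \<longleftrightarrow> (\<exists>q\<in>P. p \<otimes>\<^bsub>Q\<^esub> q = r)"

definition wqlo :: "('g, 'z) monoid_scheme \<Rightarrow> 'g set \<Rightarrow> bool" where
  "wqlo Q P \<longleftrightarrow> group Q \<and> P \<subseteq> carrier Q \<and> \<one>\<^bsub>Q\<^esub> \<in> P
     \<and> (\<forall>p\<in>P. \<forall>q\<in>P. p \<otimes>\<^bsub>Q\<^esub> q \<in> P)
     \<and> P \<inter> (\<lambda>p. inv\<^bsub>Q\<^esub> p) ` P = {\<one>\<^bsub>Q\<^esub>}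
     \<and> (\<forall>p\<in>P. \<forall>q\<in>P. (\<exists>u\<in>P. pleq Q P p u \<and> pleq Q P q u) \<longrightarrow>
          (\<exists>l\<in>P. pleq Q P p l \<and> pleq Q P q l \<and>
              (\<forall>u\<in>P. pleq Q P p u \<and> pleq Q P q u \<longrightarrow> pleq Q P l u)))"

text \<open>A small category is given by its set of morphisms L, its set of identity
  morphisms L0 (a subset of L), range and source maps r, s and a composition
  cmp, where cmp mu nu is defined (meaningful) when s mu = r nu.
  d is the degree functor into P.\<close>

definition P_graph ::
  "('g, 'z) monoid_scheme \<Rightarrow> 'g set \<Rightarrow> 'a set \<Rightarrow> 'a set \<Rightarrow> ('a \<Rightarrow> 'a) \<Rightarrow> ('a \<Rightarrow> 'a)
     \<Rightarrow> ('a \<Rightarrow> 'a \<Rightarrow> 'a) \<Rightarrow> ('a \<Rightarrow> 'g) \<Rightarrow> bool" where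
  "P_graph Q P L L0 r s cmp d \<longleftrightarrow>
     countable L \<and> L0 \<subseteq> L
     \<and> (\<forall>l\<in>L. r l \<in> L0 \<and> s l \<in> L0)
     \<and> (\<forall>v\<in>L0. r v = v \<and> s v = v)
     \<and> (\<forall>m\<in>L. \<forall>n\<in>L. s m = r n \<longrightarrow>
           cmp m n \<in> L \<and> r (cmp m n) = r m \<and> s (cmp m n) = s n)
     \<and> (\<forall>l\<in>L. cmp (r l) l = l \<and> cmp l (s l) = l)
     \<and> (\<forall>a\<in>L. \<forall>b\<in>L. \<forall>c\<in>L. s a = r b \<and> s b = r c \<longrightarrow>
           cmp (cmp a b) c = cmp a (cmp b c))
     \<and> (\<forall>l\<in>L. d l \<in> P)
     \<and> (\<forall>m\<in>L. \<forall>n\<in>L. s m = r n \<longrightarrow> d (cmp m n) = d m \<otimes>\<^bsub>Q\<^esub> d n)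
     \<and> (\<forall>l\<in>L. \<forall>p\<in>P. \<forall>q\<in>P. d l = p \<otimes>\<^bsub>Q\<^esub> q \<longrightarrow>
           (\<exists>!mn. fst mn \<in> L \<and> snd mn \<in> L \<and> s (fst mn) = r (snd mn)
                  \<and> l = cmp (fst mn) (snd mn) \<and> d (fst mn) = p \<and> d (snd mn) = q))"

definition ext_set :: "'a set \<Rightarrow> ('a \<Rightarrow> 'a) \<Rightarrow> ('a \<Rightarrow> 'a) \<Rightarrow> ('a \<Rightarrow> 'a \<Rightarrow> 'a) \<Rightarrow> 'a \<Rightarrow> 'a set" where
  "ext_set L r s cmp l = {cmp l m | m. m \<in> L \<and> s l = r m}"

definition prefix_of :: "'a set \<Rightarrow> ('a \<Rightarrow> 'a) \<Rightarrow> ('a \<Rightarrow> 'a) \<Rightarrow> ('a \<Rightarrow> 'a \<Rightarrow> 'a) \<Rightarrow> 'a \<Rightarrow> 'a \<Rightarrow> bool" where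
  "prefix_of L r s cmp m l \<longleftrightarrow> (\<exists>n\<in>L. s m = r n \<and> l = cmp m n)"

definition fin_aligned_pair :: "'a set \<Rightarrow> ('a \<Rightarrow> 'a) \<Rightarrow> ('a \<Rightarrow> 'a) \<Rightarrow> ('a \<Rightarrow> 'a \<Rightarrow> 'a) \<Rightarrow> 'a \<Rightarrow> 'a \<Rightarrow> bool" where
  "fin_aligned_pair L r s cmp m n \<longleftrightarrow>
     (\<exists>J. finite J \<and> J \<subseteq> L \<and>
        ext_set L r s cmp m \<inter> ext_set L r s cmp n = (\<Union>l\<in>J. ext_set L r s cmp l))"

definition fin_aligned_at :: "'a set \<Rightarrow> ('a \<Rightarrow> 'a) \<Rightarrow> ('a \<Rightarrow> 'a) \<Rightarrow> ('a \<Rightarrow> 'a \<Rightarrow> 'a) \<Rightarrow> 'a \<Rightarrow> bool" where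
  "fin_aligned_at L r s cmp l \<longleftrightarrow>
     (\<forall>m\<in>ext_set L r s cmp l. \<forall>n\<in>L. fin_aligned_pair L r s cmp m n)"

definition FA :: "'a set \<Rightarrow> ('a \<Rightarrow> 'a) \<Rightarrow> ('a \<Rightarrow> 'a) \<Rightarrow> ('a \<Rightarrow> 'a \<Rightarrow> 'a) \<Rightarrow> 'a set" where
  "FA L r s cmp = {l \<in> L. fin_aligned_at L r s cmp l}"

definition is_filter :: "'a set \<Rightarrow> ('a \<Rightarrow> 'a) \<Rightarrow> ('a \<Rightarrow> 'a) \<Rightarrow> ('a \<Rightarrow> 'a \<Rightarrow> 'a) \<Rightarrow> 'a set \<Rightarrow> bool" where
  "is_filter L r s cmp x \<longleftrightarrow> x \<subseteq> L \<and> x \<noteq> {}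
     \<and> (\<forall>l\<in>L. \<forall>m\<in>x. prefix_of L r s cmp l m \<longrightarrow> l \<in> x)
     \<and> (\<forall>m\<in>x. \<forall>n\<in>x. \<exists>l\<in>x. prefix_of L r s cmp m l \<and> prefix_of L r s cmp n l)"

definition filters :: "'a set \<Rightarrow> ('a \<Rightarrow> 'a) \<Rightarrow> ('a \<Rightarrow> 'a) \<Rightarrow> ('a \<Rightarrow> 'a \<Rightarrow> 'a) \<Rightarrow> 'a set set" where
  "filters L r s cmp = {x. is_filter L r s cmp x}"

definition ultrafilters :: "'a set \<Rightarrow> ('a \<Rightarrow> 'a) \<Rightarrow> ('a \<Rightarrow> 'a) \<Rightarrow> ('a \<Rightarrow> 'a \<Rightarrow> 'a) \<Rightarrow> 'a set set" where
  "ultrafilters L r s cmp = {x \<in> filters L r s cmp.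
      \<forall>y\<in>filters L r s cmp. x \<subseteq> y \<longrightarrow> y = x}"

definition path_space :: "'a set \<Rightarrow> ('a \<Rightarrow> 'a) \<Rightarrow> ('a \<Rightarrow> 'a) \<Rightarrow> ('a \<Rightarrow> 'a \<Rightarrow> 'a) \<Rightarrow> 'a set set" where
  "path_space L r s cmp = {x \<in> filters L r s cmp. x \<inter> FA L r s cmp \<noteq> {}}"

definition powerset_top :: "'a set \<Rightarrow> 'a set topology" where
  "powerset_top L = pullback_topology (Pow L) (\<lambda>x. restrict (\<lambda>l. l \<in> x) L)
      (product_topology (\<lambda>_. discrete_topology (UNIV :: bool set)) L)"

definition boundary_path_space :: "'a set \<Rightarrow> ('a \<Rightarrow> 'a) \<Rightarrow> ('a \<Rightarrow> 'a) \<Rightarrow> ('a \<Rightarrow> 'a \<Rightarrow> 'a) \<Rightarrow> 'a set set" where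
  "boundary_path_space L r s cmp =
     (subtopology (powerset_top L) (path_space L r s cmp)) closure_of
        (ultrafilters L r s cmp \<inter> path_space L r s cmp)"

definition has_countable_compact_basis :: "'b topology \<Rightarrow> bool" where
  "has_countable_compact_basis T \<longleftrightarrow>
     (\<exists>B. countable B \<and> (\<forall>b\<in>B. openin T b \<and> compactin T b)
        \<and> (\<forall>U. openin T U \<longrightarrow> (\<forall>x\<in>U. \<exists>b\<in>B. x \<in> b \<and> b \<subseteq> U)))"

end

theory Submission
  imports Defs
begin

text \<open>Via characteristic functions the power set of \<open>\<Lambda>\<close> is the Cantor cube \<open>{0,1}\<^sup>\<Lambda>\<close>:
  compact and Hausdorff, with the clopen cylinders \<open>{x. K\<^sub>1 \<subseteq> x, K\<^sub>2 \<inter> x = {}}\<close>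
  (\<open>K\<^sub>1, K\<^sub>2\<close> finite) as a basis, countable because \<open>\<Lambda>\<close> is. The key point is that for
  \<open>\<lambda> \<in> FA(\<Lambda>)\<close> the filters containing \<open>\<lambda>\<close> form a closed set: if \<open>x \<ni> \<lambda>\<close> is not a
  filter, this is witnessed on finitely many paths, for a failure of directedness at
  \<open>\<mu>, \<nu>\<close> by the finitely many common extensions that finite alignment at \<open>\<lambda>\<close> provides.
  Intersecting these closed sets with cylinders gives a countable basis of compact open
  sets of \<open>\<X>(\<Lambda>)\<close>, which the closed subspace \<open>\<partial>\<X>(\<Lambda>)\<close> inherits.\<close>

definition char_fun :: "'a set \<Rightarrow> 'a set \<Rightarrow> 'a \<Rightarrow> bool" where
  "char_fun L x = restrict (\<lambda>l. l \<in> x) L"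

abbreviation bool_cube :: "'a set \<Rightarrow> ('a \<Rightarrow> bool) topology" where
  "bool_cube L \<equiv> product_topology (\<lambda>_. discrete_topology UNIV) L"

definition cylinder :: "'a set \<Rightarrow> 'a set \<Rightarrow> 'a set \<Rightarrow> 'a set set" where
  "cylinder L K1 K2 = {y \<in> Pow L. K1 \<subseteq> y \<and> K2 \<inter> y = {}}"

lemma powerset_top_eq_pullback:
  "powerset_top L = pullback_topology (Pow L) (char_fun L) (bool_cube L)"
  unfolding powerset_top_def char_fun_def by simp

lemma topspace_powerset_top [simp]: "topspace (powerset_top L) = Pow L"
  unfolding powerset_top_eq_pullback topspace_pullback_topology by (auto simp: char_fun_def)

lemma homeomorphic_map_char_fun: "homeomorphic_map (powerset_top L) (bool_cube L) (char_fun L)"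
proof -
  have "continuous_map (powerset_top L) (bool_cube L) (id \<circ> char_fun L)"
    unfolding powerset_top_eq_pullback by (rule continuous_map_pullback[OF continuous_map_id])
  moreover have "continuous_map (bool_cube L) (powerset_top L) (\<lambda>f. {l \<in> L. f l})"
    unfolding powerset_top_eq_pullback
  proof (rule continuous_map_pullback')
    show "continuous_map (bool_cube L) (bool_cube L) (char_fun L \<circ> (\<lambda>f. {l \<in> L. f l}))"
      by (rule continuous_map_eq[OF continuous_map_id])
        (auto simp: char_fun_def PiE_def extensional_def fun_eq_iff)
  qed auto
  ultimately show ?thesis
    by (intro homeomorphic_maps_imp_map[where g = "\<lambda>f. {l \<in> L. f l}"])
      (auto simp: homeomorphic_maps_def char_fun_def PiE_def extensional_def fun_eq_iff)
qed

lemma compact_space_powerset_top: "compact_space (powerset_top L)"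
  using homeomorphic_compact_space[OF homeomorphic_map_imp_homeomorphic_space[OF homeomorphic_map_char_fun]]
  by (simp add: compact_space_product_topology compact_space_discrete_topology)

lemma Hausdorff_space_powerset_top: "Hausdorff_space (powerset_top L)"
  using homeomorphic_Hausdorff_space[OF homeomorphic_map_imp_homeomorphic_space[OF homeomorphic_map_char_fun]]
  by (simp add: Hausdorff_space_product_topology)

lemma cylinder_eq_preimage:
  assumes "K1 \<subseteq> L"
  shows "cylinder L K1 K2 = {y \<in> topspace (powerset_top L).
      char_fun L y \<in> (\<Pi>\<^sub>E i\<in>L. {b. (i \<in> K1 \<longrightarrow> b) \<and> (i \<in> K2 \<longrightarrow> \<not> b)})}"
  using assms by (auto simp: cylinder_def char_fun_def)

lemma openin_cylinder:
  assumes "finite K1" "finite K2" "K1 \<subseteq> L"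
  shows "openin (powerset_top L) (cylinder L K1 K2)"
proof -
  have "finite {i \<in> L. {b. (i \<in> K1 \<longrightarrow> b) \<and> (i \<in> K2 \<longrightarrow> \<not> b)} \<noteq> UNIV}"
    by (rule finite_subset[of _ "K1 \<union> K2"]) (use assms in auto)
  then show ?thesis
    unfolding cylinder_eq_preimage[OF assms(3)]
    by (intro openin_continuous_map_preimage[OF homeomorphic_imp_continuous_map[OF homeomorphic_map_char_fun]])
      (simp add: openin_PiE_gen)
qed

lemma closedin_cylinder:
  assumes "K1 \<subseteq> L"
  shows "closedin (powerset_top L) (cylinder L K1 K2)"
  unfolding cylinder_eq_preimage[OF assms]
  by (intro closedin_continuous_map_preimage[OF homeomorphic_imp_continuous_map[OF homeomorphic_map_char_fun]])
    (simp add: closedin_product_topology)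

lemma cylinder_neighbourhood:
  assumes "openin (powerset_top L) U" "x \<in> U"
  shows "\<exists>K1 K2. finite K1 \<and> finite K2 \<and> K1 \<subseteq> x \<and> K2 \<subseteq> L - x \<and> cylinder L K1 K2 \<subseteq> U"
proof -
  obtain V where V: "openin (bool_cube L) V" "U = char_fun L -` V \<inter> Pow L"
    using assms(1) unfolding powerset_top_eq_pullback openin_pullback_topology by blast
  obtain W where W: "finite {i \<in> L. W i \<noteq> UNIV}" "char_fun L x \<in> Pi\<^sub>E L W" "Pi\<^sub>E L W \<subseteq> V"
    using V assms(2) unfolding openin_product_topology_alt by force
  define K1 where "K1 = {i \<in> L. W i \<noteq> UNIV \<and> i \<in> x}"
  define K2 where "K2 = {i \<in> L. W i \<noteq> UNIV \<and> i \<notin> x}"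
  have char_fun_in_W: "char_fun L y \<in> Pi\<^sub>E L W" if y: "y \<in> cylinder L K1 K2" for y
  proof -
    have "(i \<in> y) \<in> W i" if i: "i \<in> L" for i
    proof (cases "W i = UNIV")
      case False
      then have "i \<in> y \<longleftrightarrow> i \<in> x"
        using y i unfolding cylinder_def K1_def K2_def by blast
      then show ?thesis
        using W(2) i by (simp add: char_fun_def PiE_iff)
    qed simp
    then show ?thesis
      by (simp add: char_fun_def)
  qed
  have "cylinder L K1 K2 \<subseteq> U"
  proof
    fix y assume y: "y \<in> cylinder L K1 K2"
    then show "y \<in> U"
      using char_fun_in_W[OF y] W(3) V(2) by (auto simp: cylinder_def)
  qed
  moreover have "finite K1" "finite K2"
    using W(1) by (auto intro: rev_finite_subset simp: K1_def K2_def)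
  ultimately show ?thesis
    by (intro exI[of _ K1] exI[of _ K2]) (auto simp: K1_def K2_def)
qed

lemma openin_powerset_top_iff:
  "openin (powerset_top L) U \<longleftrightarrow> U \<subseteq> Pow L \<and> (\<forall>x\<in>U. \<exists>K1 K2.
      finite K1 \<and> finite K2 \<and> K1 \<subseteq> x \<and> K2 \<subseteq> L - x \<and> cylinder L K1 K2 \<subseteq> U)"
proof
  assume U: "openin (powerset_top L) U"
  have "U \<subseteq> Pow L"
    using openin_subset[OF U] by simp
  moreover have "\<forall>x\<in>U. \<exists>K1 K2.
      finite K1 \<and> finite K2 \<and> K1 \<subseteq> x \<and> K2 \<subseteq> L - x \<and> cylinder L K1 K2 \<subseteq> U"
    using cylinder_neighbourhood[OF U] by blast
  ultimately show "U \<subseteq> Pow L \<and> (\<forall>x\<in>U. \<exists>K1 K2.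
      finite K1 \<and> finite K2 \<and> K1 \<subseteq> x \<and> K2 \<subseteq> L - x \<and> cylinder L K1 K2 \<subseteq> U)"
    by blast
next
  assume U: "U \<subseteq> Pow L \<and> (\<forall>x\<in>U. \<exists>K1 K2.
      finite K1 \<and> finite K2 \<and> K1 \<subseteq> x \<and> K2 \<subseteq> L - x \<and> cylinder L K1 K2 \<subseteq> U)"
  show "openin (powerset_top L) U"
  proof (subst openin_subopen, intro ballI)
    fix x assume "x \<in> U"
    then obtain K1 K2 where K: "finite K1" "finite K2" "K1 \<subseteq> x" "K2 \<subseteq> L - x" "cylinder L K1 K2 \<subseteq> U"
      using U by blast
    moreover have "K1 \<subseteq> L" "x \<in> cylinder L K1 K2"
      using K(3,4) U \<open>x \<in> U\<close> by (auto simp: cylinder_def)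
    ultimately show "\<exists>T. openin (powerset_top L) T \<and> x \<in> T \<and> T \<subseteq> U"
      by (meson openin_cylinder)
  qed
qed

lemma closedin_powerset_top_iff:
  "closedin (powerset_top L) S \<longleftrightarrow> S \<subseteq> Pow L \<and> (\<forall>x\<in>Pow L - S. \<exists>K1 K2.
      finite K1 \<and> finite K2 \<and> K1 \<subseteq> x \<and> K2 \<subseteq> L - x \<and> cylinder L K1 K2 \<inter> S = {})"
proof -
  have "cylinder L K1 K2 \<subseteq> Pow L - S \<longleftrightarrow> cylinder L K1 K2 \<inter> S = {}" for K1 K2
    by (auto simp: cylinder_def)
  then show ?thesis
    unfolding closedin_def openin_powerset_top_iff by auto
qed

locale small_category =
  fixes L L0 :: "'a set" and r s :: "'a \<Rightarrow> 'a" and cmp :: "'a \<Rightarrow> 'a \<Rightarrow> 'a"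
  assumes objects_subset: "L0 \<subseteq> L"
    and range_source_objects: "l \<in> L \<Longrightarrow> r l \<in> L0 \<and> s l \<in> L0"
    and objects_range_source: "v \<in> L0 \<Longrightarrow> r v = v \<and> s v = v"
    and comp_closed: "\<lbrakk>m \<in> L; n \<in> L; s m = r n\<rbrakk> \<Longrightarrow>
       cmp m n \<in> L \<and> r (cmp m n) = r m \<and> s (cmp m n) = s n"
    and comp_units: "l \<in> L \<Longrightarrow> cmp (r l) l = l \<and> cmp l (s l) = l"
    and comp_assoc: "\<lbrakk>a \<in> L; b \<in> L; c \<in> L; s a = r b; s b = r c\<rbrakk> \<Longrightarrow>
       cmp (cmp a b) c = cmp a (cmp b c)"

lemma P_graph_imp_small_category:
  "P_graph Q P L L0 r s cmp d \<Longrightarrow> small_category L L0 r s cmp"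
  unfolding P_graph_def small_category_def by (elim conjE) (intro conjI allI impI; blast)

context small_category
begin

abbreviation prefix_rel (infix "\<preceq>" 50) where
  "m \<preceq> l \<equiv> prefix_of L r s cmp m l"

lemma ext_set_eq: "ext_set L r s cmp m = {l. m \<preceq> l}"
  by (auto simp: prefix_of_def ext_set_def)

lemma prefix_refl: "l \<in> L \<Longrightarrow> l \<preceq> l"
  using range_source_objects[of l] objects_subset objects_range_source[of "s l"] comp_units[of l]
  unfolding prefix_of_def by (intro bexI[of _ "s l"]) auto

lemma prefix_trans:
  assumes a: "a \<in> L" and ab: "a \<preceq> b" and bc: "b \<preceq> c"
  shows "a \<preceq> c"
proof -
  obtain n where n: "n \<in> L" "s a = r n" "b = cmp a n"
    using ab unfolding prefix_of_def by blast
  obtain m where m: "m \<in> L" "s b = r m" "c = cmp b m"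
    using bc unfolding prefix_of_def by blast
  have "s n = r m"
    using comp_closed[OF a n(1,2)] n(3) m(2) by simp
  then have "c = cmp a (cmp n m)" "cmp n m \<in> L" "r (cmp n m) = r n"
    using comp_assoc[OF a n(1) m(1) n(2)] comp_closed[OF n(1) m(1)] m(3) n(3) by auto
  then show ?thesis
    using n(2) unfolding prefix_of_def by (intro bexI[of _ "cmp n m"]) auto
qed

lemma fin_aligned_pair_common_extensions:
  assumes "fin_aligned_pair L r s cmp m n"
  shows "\<exists>J. finite J \<and> J \<subseteq> L \<and> (\<forall>k\<in>J. m \<preceq> k \<and> n \<preceq> k)
    \<and> (\<forall>e. m \<preceq> e \<and> n \<preceq> e \<longrightarrow> (\<exists>k\<in>J. k \<preceq> e))"
proof -
  obtain J where J: "finite J" "J \<subseteq> L" "{l. m \<preceq> l} \<inter> {l. n \<preceq> l} = (\<Union>k\<in>J. {l. k \<preceq> l})"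
    using assms unfolding fin_aligned_pair_def ext_set_eq by blast
  have "m \<preceq> k \<and> n \<preceq> k" if "k \<in> J" for k
    using J(2,3) prefix_refl[of k] that by blast
  moreover have "\<exists>k\<in>J. k \<preceq> e" if "m \<preceq> e" "n \<preceq> e" for e
    using J(3) that by blast
  ultimately show ?thesis
    using J(1,2) by blast
qed

lemma FA_fin_aligned_pair:
  assumes "lam \<in> FA L r s cmp" "lam \<preceq> m" "n \<in> L"
  shows "fin_aligned_pair L r s cmp m n"
  using assms unfolding FA_def fin_aligned_at_def ext_set_eq by simp

lemma FA_finite_common_extensions:
  assumes lam: "lam \<in> FA L r s cmp" and mu: "mu \<in> L" and nu: "nu \<in> L"
  shows "\<exists>K. finite K \<and> K \<subseteq> L \<and> (\<forall>k\<in>K. mu \<preceq> k \<and> nu \<preceq> k)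
    \<and> (\<forall>e. lam \<preceq> e \<and> mu \<preceq> e \<and> nu \<preceq> e \<longrightarrow> (\<exists>k\<in>K. k \<preceq> e))"
proof -
  have "lam \<in> L"
    using lam unfolding FA_def by simp
  obtain J where J: "finite J" "J \<subseteq> L" "\<forall>j\<in>J. lam \<preceq> j \<and> mu \<preceq> j"
      "\<forall>e. lam \<preceq> e \<and> mu \<preceq> e \<longrightarrow> (\<exists>j\<in>J. j \<preceq> e)"
    using fin_aligned_pair_common_extensions[OF FA_fin_aligned_pair[OF lam prefix_refl[OF \<open>lam \<in> L\<close>] mu]]
    by blast
  have "\<forall>j\<in>J. \<exists>Kj. finite Kj \<and> Kj \<subseteq> L \<and> (\<forall>k\<in>Kj. j \<preceq> k \<and> nu \<preceq> k)
      \<and> (\<forall>e. j \<preceq> e \<and> nu \<preceq> e \<longrightarrow> (\<exists>k\<in>Kj. k \<preceq> e))"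
    using J(3) fin_aligned_pair_common_extensions[OF FA_fin_aligned_pair[OF lam _ nu]] by blast
  then obtain KK where KK: "\<forall>j\<in>J. finite (KK j) \<and> KK j \<subseteq> L \<and> (\<forall>k\<in>KK j. j \<preceq> k \<and> nu \<preceq> k)
      \<and> (\<forall>e. j \<preceq> e \<and> nu \<preceq> e \<longrightarrow> (\<exists>k\<in>KK j. k \<preceq> e))"
    by (metis bchoice)
  define K where "K = (\<Union>j\<in>J. KK j)"
  have "finite K" "K \<subseteq> L"
    using J(1) KK unfolding K_def by auto
  moreover have "\<forall>k\<in>K. mu \<preceq> k \<and> nu \<preceq> k"
    using J(3) KK prefix_trans[OF mu] unfolding K_def by blast
  moreover have "\<forall>e. lam \<preceq> e \<and> mu \<preceq> e \<and> nu \<preceq> e \<longrightarrow> (\<exists>k\<in>K. k \<preceq> e)"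
  proof (intro allI impI)
    fix e assume e: "lam \<preceq> e \<and> mu \<preceq> e \<and> nu \<preceq> e"
    then obtain j where "j \<in> J" "j \<preceq> e"
      using J(4) by blast
    moreover from this obtain k where "k \<in> KK j" "k \<preceq> e"
      using KK e by blast
    ultimately show "\<exists>k\<in>K. k \<preceq> e"
      unfolding K_def by blast
  qed
  ultimately show ?thesis
    by blast
qed

lemma is_filter_upper_bound:
  assumes x: "is_filter L r s cmp x" and "a \<in> x" "b \<in> x" "c \<in> x"
  shows "\<exists>e\<in>x. a \<preceq> e \<and> b \<preceq> e \<and> c \<preceq> e"
proof -
  have "x \<subseteq> L" and directed: "\<And>m n. \<lbrakk>m \<in> x; n \<in> x\<rbrakk> \<Longrightarrow> \<exists>l\<in>x. m \<preceq> l \<and> n \<preceq> l"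
    using x unfolding is_filter_def by blast+
  obtain e1 where e1: "e1 \<in> x" "a \<preceq> e1" "b \<preceq> e1"
    using directed assms(2,3) by blast
  obtain e where e: "e \<in> x" "e1 \<preceq> e" "c \<preceq> e"
    using directed e1(1) assms(4) by blast
  have "a \<preceq> e" "b \<preceq> e"
    using prefix_trans e1 e(2) assms(2,3) \<open>x \<subseteq> L\<close> by blast+
  then show ?thesis
    using e by blast
qed

lemma FA_common_extensions_separate_filters:
  assumes lam: "lam \<in> FA L r s cmp" and "mu \<in> L" "nu \<in> L"
  shows "\<exists>K. finite K \<and> K \<subseteq> L \<and> (\<forall>k\<in>K. mu \<preceq> k \<and> nu \<preceq> k)
    \<and> cylinder L {lam, mu, nu} K \<inter> {y \<in> filters L r s cmp. lam \<in> y} = {}"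
proof -
  obtain K where K: "finite K" "K \<subseteq> L" "\<forall>k\<in>K. mu \<preceq> k \<and> nu \<preceq> k"
      "\<forall>e. lam \<preceq> e \<and> mu \<preceq> e \<and> nu \<preceq> e \<longrightarrow> (\<exists>k\<in>K. k \<preceq> e)"
    using FA_finite_common_extensions[OF assms] by blast
  have "K \<inter> y \<noteq> {}" if y: "is_filter L r s cmp y" "lam \<in> y" "mu \<in> y" "nu \<in> y" for y
  proof -
    obtain e where e: "e \<in> y" "lam \<preceq> e" "mu \<preceq> e" "nu \<preceq> e"
      using is_filter_upper_bound[OF y] by blast
    then obtain k where k: "k \<in> K" "k \<preceq> e"
      using K(4) by blast
    have "k \<in> y"
      using y(1) k K(2) e(1) unfolding is_filter_def by blast
    then show ?thesis
      using k(1) by blast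
  qed
  then have "cylinder L {lam, mu, nu} K \<inter> {y \<in> filters L r s cmp. lam \<in> y} = {}"
    unfolding cylinder_def filters_def by blast
  then show ?thesis
    using K(1-3) by (intro exI[of _ K]) blast
qed

lemma not_is_filterE:
  assumes "x \<subseteq> L" "x \<noteq> {}" "\<not> is_filter L r s cmp x"
  obtains (not_hereditary) l m where "l \<in> L" "m \<in> x" "l \<preceq> m" "l \<notin> x"
    | (not_directed) mu nu where "mu \<in> x" "nu \<in> x" "\<not> (\<exists>l\<in>x. mu \<preceq> l \<and> nu \<preceq> l)"
  using assms unfolding is_filter_def by blast

lemma closedin_filters_containing:
  assumes lam: "lam \<in> FA L r s cmp"
  shows "closedin (powerset_top L) {x \<in> filters L r s cmp. lam \<in> x}" (is "closedin _ ?S")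
  unfolding closedin_powerset_top_iff
proof (intro conjI ballI)
  show "?S \<subseteq> Pow L"
    unfolding filters_def is_filter_def by blast
  fix x assume x: "x \<in> Pow L - ?S"
  then have "x \<subseteq> L"
    by blast
  show "\<exists>K1 K2. finite K1 \<and> finite K2 \<and> K1 \<subseteq> x \<and> K2 \<subseteq> L - x \<and> cylinder L K1 K2 \<inter> ?S = {}"
  proof (cases "lam \<in> x")
    case False
    moreover have "lam \<in> L"
      using lam unfolding FA_def by simp
    ultimately show ?thesis
      by (intro exI[of _ "{}"] exI[of _ "{lam}"]) (auto simp: cylinder_def)
  next
    case True
    then have "x \<noteq> {}" "\<not> is_filter L r s cmp x"
      using x unfolding filters_def by blast+
    with \<open>x \<subseteq> L\<close> show ?thesis
    proof (cases rule: not_is_filterE)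
      case (not_hereditary l m)
      then have "l \<in> y" if "y \<in> ?S" "m \<in> y" for y
        using that unfolding filters_def is_filter_def by blast
      then show ?thesis
        using not_hereditary by (intro exI[of _ "{m}"] exI[of _ "{l}"]) (auto simp: cylinder_def)
    next
      case (not_directed mu nu)
      then have "mu \<in> L" "nu \<in> L"
        using \<open>x \<subseteq> L\<close> by blast+
      obtain K where K: "finite K" "K \<subseteq> L" "\<forall>k\<in>K. mu \<preceq> k \<and> nu \<preceq> k"
          "cylinder L {lam, mu, nu} K \<inter> ?S = {}"
        using FA_common_extensions_separate_filters[OF lam \<open>mu \<in> L\<close> \<open>nu \<in> L\<close>]
        by (elim exE conjE) (rule that)
      moreover have "K \<subseteq> L - x"
        using K(2,3) not_directed(3) by blast
      ultimately show ?thesis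
        using True not_directed(1,2) by (intro exI[of _ "{lam, mu, nu}"] exI[of _ K]) auto
    qed
  qed
qed

end

lemma filters_subset_Pow: "filters L r s cmp \<subseteq> Pow L"
  unfolding filters_def is_filter_def by blast

lemma path_space_eq_Union:
  "path_space L r s cmp = (\<Union>lam\<in>FA L r s cmp. {x \<in> filters L r s cmp. lam \<in> x})"
  unfolding path_space_def by blast

lemma openin_path_space_filters:
  "openin (subtopology (powerset_top L) (filters L r s cmp)) (path_space L r s cmp)"
proof -
  have "openin (powerset_top L) (cylinder L {lam} {})" if "lam \<in> FA L r s cmp" for lam
    using that by (intro openin_cylinder) (auto simp: FA_def)
  then have "openin (powerset_top L) (\<Union>lam\<in>FA L r s cmp. cylinder L {lam} {})"
    by blast
  moreover have "path_space L r s cmp = (\<Union>lam\<in>FA L r s cmp. cylinder L {lam} {}) \<inter> filters L r s cmp"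
    using filters_subset_Pow[of L r s cmp] unfolding path_space_def cylinder_def by auto
  ultimately show ?thesis
    unfolding openin_subtopology by blast
qed

lemma has_countable_compact_basis_closedin_subtopology:
  assumes "has_countable_compact_basis T" and C: "closedin T C"
  shows "has_countable_compact_basis (subtopology T C)"
proof -
  obtain B where B: "countable B" "\<forall>b\<in>B. openin T b \<and> compactin T b"
      "\<forall>U. openin T U \<longrightarrow> (\<forall>x\<in>U. \<exists>b\<in>B. x \<in> b \<and> b \<subseteq> U)"
    using assms(1) unfolding has_countable_compact_basis_def by blast
  define B' where "B' = (\<lambda>b. b \<inter> C) ` B"
  have "countable B'"
    using B(1) unfolding B'_def by simp
  moreover have "\<forall>b'\<in>B'. openin (subtopology T C) b' \<and> compactin (subtopology T C) b'"
  proof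
    fix b' assume "b' \<in> B'"
    then obtain b where b: "b \<in> B" "b' = b \<inter> C"
      unfolding B'_def by blast
    then have "openin T b" "compactin T b"
      using B(2) by blast+
    then have "openin (subtopology T C) (b \<inter> C)" "compactin (subtopology T C) (b \<inter> C)"
      using closed_Int_compactin[OF C \<open>compactin T b\<close>]
      by (auto simp: openin_subtopology compactin_subtopology Int_commute)
    then show "openin (subtopology T C) b' \<and> compactin (subtopology T C) b'"
      using b(2) by simp
  qed
  moreover have "\<forall>U. openin (subtopology T C) U \<longrightarrow> (\<forall>x\<in>U. \<exists>b'\<in>B'. x \<in> b' \<and> b' \<subseteq> U)"
  proof (intro allI impI ballI)
    fix U x assume U: "openin (subtopology T C) U" "x \<in> U"
    obtain V where V: "openin T V" "U = V \<inter> C"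
      using U(1) unfolding openin_subtopology by blast
    have "x \<in> V" "x \<in> C"
      using U(2) unfolding V(2) by simp_all
    then obtain b where "b \<in> B" "x \<in> b" "b \<subseteq> V"
      using B(3) V(1) by blast
    moreover have "b \<inter> C \<in> B'"
      unfolding B'_def using \<open>b \<in> B\<close> by (rule imageI)
    ultimately show "\<exists>b'\<in>B'. x \<in> b' \<and> b' \<subseteq> U"
      using \<open>x \<in> C\<close> unfolding V(2) by (intro bexI[of _ "b \<inter> C"]) auto
  qed
  ultimately show ?thesis
    unfolding has_countable_compact_basis_def by blast
qed

definition filter_cylinder ::
  "'a set \<Rightarrow> ('a \<Rightarrow> 'a) \<Rightarrow> ('a \<Rightarrow> 'a) \<Rightarrow> ('a \<Rightarrow> 'a \<Rightarrow> 'a) \<Rightarrow> 'a \<Rightarrow> 'a set \<Rightarrow> 'a set \<Rightarrow> 'a set set" where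
  "filter_cylinder L r s cmp lam K1 K2 = {x \<in> filters L r s cmp. lam \<in> x} \<inter> cylinder L K1 K2"

lemma filter_cylinder_subset_path_space:
  "lam \<in> FA L r s cmp \<Longrightarrow> filter_cylinder L r s cmp lam K1 K2 \<subseteq> path_space L r s cmp"
  unfolding filter_cylinder_def path_space_eq_Union by blast

lemma openin_filter_cylinder:
  assumes lam: "lam \<in> FA L r s cmp" and "finite K1" "K1 \<subseteq> L" "finite K2"
  shows "openin (subtopology (powerset_top L) (path_space L r s cmp)) (filter_cylinder L r s cmp lam K1 K2)"
proof -
  have "lam \<in> L"
    using lam by (simp add: FA_def)
  then have "openin (powerset_top L) (cylinder L (insert lam K1) K2)"
    using assms(2-4) by (intro openin_cylinder) auto
  moreover have "filter_cylinder L r s cmp lam K1 K2 = cylinder L (insert lam K1) K2 \<inter> path_space L r s cmp"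
    using lam filters_subset_Pow[of L r s cmp]
    unfolding filter_cylinder_def path_space_eq_Union cylinder_def by auto
  ultimately show ?thesis
    unfolding openin_subtopology by blast
qed

lemma (in small_category) compactin_filter_cylinder:
  assumes lam: "lam \<in> FA L r s cmp" and "K1 \<subseteq> L"
  shows "compactin (subtopology (powerset_top L) (path_space L r s cmp)) (filter_cylinder L r s cmp lam K1 K2)"
proof -
  have "closedin (powerset_top L) (filter_cylinder L r s cmp lam K1 K2)"
    unfolding filter_cylinder_def using assms(2)
    by (intro closedin_Int closedin_filters_containing[OF lam] closedin_cylinder)
  then show ?thesis
    using closedin_compact_space[OF compact_space_powerset_top] filter_cylinder_subset_path_space[OF lam]
    by (simp add: compactin_subtopology)
qed

lemma filter_cylinder_neighbourhood:
  assumes U: "openin (subtopology (powerset_top L) (path_space L r s cmp)) U" and "x \<in> U"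
  shows "\<exists>lam K1 K2. lam \<in> FA L r s cmp \<and> finite K1 \<and> K1 \<subseteq> L \<and> finite K2 \<and> K2 \<subseteq> L
    \<and> x \<in> filter_cylinder L r s cmp lam K1 K2 \<and> filter_cylinder L r s cmp lam K1 K2 \<subseteq> U"
proof -
  obtain V where V: "openin (powerset_top L) V" "U = V \<inter> path_space L r s cmp"
    using U unfolding openin_subtopology by blast
  have "x \<in> V" "x \<in> path_space L r s cmp"
    using \<open>x \<in> U\<close> unfolding V(2) by simp_all
  obtain K1 K2 where K: "finite K1" "finite K2" "K1 \<subseteq> x" "K2 \<subseteq> L - x" "cylinder L K1 K2 \<subseteq> V"
    using cylinder_neighbourhood[OF V(1) \<open>x \<in> V\<close>] by blast
  obtain lam where lam: "lam \<in> FA L r s cmp" "x \<in> filters L r s cmp" "lam \<in> x"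
    using \<open>x \<in> path_space L r s cmp\<close> unfolding path_space_eq_Union by blast
  have "x \<subseteq> L"
    using lam(2) filters_subset_Pow[of L r s cmp] by blast
  have "x \<in> filter_cylinder L r s cmp lam K1 K2"
    using lam K(3,4) \<open>x \<subseteq> L\<close> unfolding filter_cylinder_def cylinder_def by blast
  moreover have "filter_cylinder L r s cmp lam K1 K2 \<subseteq> U"
    using K(5) filter_cylinder_subset_path_space[OF lam(1)] unfolding V(2) filter_cylinder_def by blast
  ultimately show ?thesis
    using lam(1) K(1-4) \<open>x \<subseteq> L\<close> by (intro exI[of _ lam] exI[of _ K1] exI[of _ K2]) blast
qed

lemma (in small_category) path_space_countable_compact_basis:
  assumes "countable L"
  shows "has_countable_compact_basis (subtopology (powerset_top L) (path_space L r s cmp))"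
proof -
  let ?T = "subtopology (powerset_top L) (path_space L r s cmp)"
  let ?fin = "{K. finite K \<and> K \<subseteq> L}"
  define B where
    "B = (\<lambda>(lam, K1, K2). filter_cylinder L r s cmp lam K1 K2) ` (FA L r s cmp \<times> ?fin \<times> ?fin)"
  have "countable (FA L r s cmp)"
    using assms by (rule countable_subset[rotated]) (auto simp: FA_def)
  then have "countable B"
    unfolding B_def using countable_Collect_finite_subset[OF assms] by simp
  moreover have "\<forall>b\<in>B. openin ?T b \<and> compactin ?T b"
  proof
    fix b assume "b \<in> B"
    then obtain lam K1 K2 where lam: "lam \<in> FA L r s cmp" and K: "finite K1" "K1 \<subseteq> L" "finite K2"
        and b: "b = filter_cylinder L r s cmp lam K1 K2"
      unfolding B_def by auto
    show "openin ?T b \<and> compactin ?T b"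
      unfolding b using openin_filter_cylinder[OF lam K] compactin_filter_cylinder[OF lam K(2)] ..
  qed
  moreover have "\<forall>U. openin ?T U \<longrightarrow> (\<forall>x\<in>U. \<exists>b\<in>B. x \<in> b \<and> b \<subseteq> U)"
  proof (intro allI impI ballI)
    fix U x assume U: "openin ?T U" "x \<in> U"
    obtain lam K1 K2 where nbhd: "lam \<in> FA L r s cmp" "finite K1" "K1 \<subseteq> L" "finite K2" "K2 \<subseteq> L"
        "x \<in> filter_cylinder L r s cmp lam K1 K2" "filter_cylinder L r s cmp lam K1 K2 \<subseteq> U"
      using filter_cylinder_neighbourhood[OF U] by blast
    moreover have "filter_cylinder L r s cmp lam K1 K2 \<in> B"
      unfolding B_def using nbhd(1-5) by (intro image_eqI[of _ _ "(lam, K1, K2)"]) auto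
    ultimately show "\<exists>b\<in>B. x \<in> b \<and> b \<subseteq> U"
      by blast
  qed
  ultimately show ?thesis
    unfolding has_countable_compact_basis_def by blast
qed

theorem theorem4p9:
  fixes Q :: "('g, 'z) monoid_scheme" and P :: "'g set"
    and L L0 :: "'a set" and r s :: "'a \<Rightarrow> 'a" and cmp :: "'a \<Rightarrow> 'a \<Rightarrow> 'a"
    and d :: "'a \<Rightarrow> 'g"
  assumes "wqlo Q P"
    and "P_graph Q P L L0 r s cmp d"
    and "FA L r s cmp \<noteq> {}"
  shows "Hausdorff_space (subtopology (powerset_top L) (path_space L r s cmp))
    \<and> has_countable_compact_basis (subtopology (powerset_top L) (path_space L r s cmp))
    \<and> Hausdorff_space (subtopology (powerset_top L) (boundary_path_space L r s cmp))
    \<and> has_countable_compact_basis (subtopology (powerset_top L) (boundary_path_space L r s cmp))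
    \<and> openin (subtopology (powerset_top L) (filters L r s cmp)) (path_space L r s cmp)"
proof -
  interpret small_category L L0 r s cmp
    using assms(2) by (rule P_graph_imp_small_category)
  let ?X = "path_space L r s cmp"
  let ?D = "boundary_path_space L r s cmp"
  have "countable L"
    using assms(2) unfolding P_graph_def by blast
  then have basis: "has_countable_compact_basis (subtopology (powerset_top L) ?X)"
    by (rule path_space_countable_compact_basis)
  have boundary_closed: "closedin (subtopology (powerset_top L) ?X) ?D"
    unfolding boundary_path_space_def by (rule closedin_closure_of)
  then have "?D \<subseteq> ?X"
    using closedin_subset by fastforce
  then have "subtopology (subtopology (powerset_top L) ?X) ?D = subtopology (powerset_top L) ?D"
    by (simp add: subtopology_subtopology Int_absorb1)
  moreover have "has_countable_compact_basis (subtopology (subtopology (powerset_top L) ?X) ?D)"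
    using basis boundary_closed by (rule has_countable_compact_basis_closedin_subtopology)
  ultimately show ?thesis
    using basis
    by (simp add: openin_path_space_filters Hausdorff_space_subtopology Hausdorff_space_powerset_top)
qed

end
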